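(* Let $R$ be a ring such that the set $\operatorname{Nil}(R)$ of nilpotent elements is closed under addition, or is closed under the operation $x\circ y=x+y-xy$. Then $R$ satisfies Köthe's conjecture.
   Context: Rings are associative and not necessarily unital. A ring $R$ satisfies Köthe's conjecture if every nil left ideal of $R$ is contained in a nil two-sided ideal (equivalently, the sum of two nil left ideals of $R$ is a nil left ideal). *)

theory Defs
  imports Main
begin

text \<open>Rings are associative, not necessarily unital: we use the type class ring
  (ab_group_add with associative, distributive multiplication, no unit required).\<close>

text \<open>Positive powers in a possibly non-unital ring: npow x n = x^(n+1).\<close>
fun npow :: "'a::ring \<Rightarrow> nat \<Rightarrow> 'a" where
  "npow x 0 = x"
| "npow x (Suc n) = npow x n * x"

definition nilpotent :: "'a::ring \<Rightarrow> bool" where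
  "nilpotent x \<longleftrightarrow> (\<exists>n. npow x n = 0)"

definition Nil_set :: "'a::ring set" where
  "Nil_set = {x. nilpotent x}"

definition additive_subgroup :: "'a::ring set \<Rightarrow> bool" where
  "additive_subgroup I \<longleftrightarrow> 0 \<in> I \<and> (\<forall>x\<in>I. \<forall>y\<in>I. x + y \<in> I) \<and> (\<forall>x\<in>I. - x \<in> I)"

definition left_ideal :: "'a::ring set \<Rightarrow> bool" where
  "left_ideal I \<longleftrightarrow> additive_subgroup I \<and> (\<forall>r x. x \<in> I \<longrightarrow> r * x \<in> I)"

definition two_sided_ideal :: "'a::ring set \<Rightarrow> bool" where
  "two_sided_ideal I \<longleftrightarrow> additive_subgroup I \<and> (\<forall>r x. x \<in> I \<longrightarrow> r * x \<in> I \<and> x * r \<in> I)"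

definition nil_set :: "'a::ring set \<Rightarrow> bool" where
  "nil_set I \<longleftrightarrow> (\<forall>x\<in>I. nilpotent x)"

definition satisfies_Koethe :: "'a::ring itself \<Rightarrow> bool" where
  "satisfies_Koethe _ \<longleftrightarrow>
     (\<forall>L :: 'a set. left_ideal L \<and> nil_set L \<longrightarrow>
        (\<exists>J. two_sided_ideal J \<and> nil_set J \<and> L \<subseteq> J))"

definition circ_op :: "'a::ring \<Rightarrow> 'a \<Rightarrow> 'a" where
  "circ_op x y = x + y - x * y"

end

theory Submission
  imports Defs "HOL-Library.Set_Algebras"
begin

text \<open>Under either hypothesis the sum of two nil left ideals is again nil: for addition this is
  immediate, and for the circle operation it holds because every \<open>x + y\<close> with \<open>x\<close> nilpotent and
  \<open>y\<close> in a left ideal \<open>B\<close> can be written as \<open>x \<circ> w\<close> with \<open>w = y + x y + \<dots> + x\<^sup>n y \<in> B\<close>.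
  Then the union of all nil left ideals is closed under addition, and it is closed under right
  multiplication because \<open>L r\<close> is a left ideal that is nil along with \<open>L\<close>, as \<open>x r\<close> is nilpotent
  whenever \<open>r x\<close> is. So this union is a nil two-sided ideal containing every nil left ideal.\<close>

lemma left_idealD:
  assumes "left_ideal I"
  shows left_ideal_zero: "0 \<in> I"
    and left_ideal_add: "x \<in> I \<Longrightarrow> y \<in> I \<Longrightarrow> x + y \<in> I"
    and left_ideal_uminus: "x \<in> I \<Longrightarrow> - x \<in> I"
    and left_ideal_mult_left: "x \<in> I \<Longrightarrow> r * x \<in> I"
  using assms by (auto simp: left_ideal_def additive_subgroup_def)

lemma left_idealI:
  assumes "0 \<in> I" "\<And>x y. x \<in> I \<Longrightarrow> y \<in> I \<Longrightarrow> x + y \<in> I" "\<And>x. x \<in> I \<Longrightarrow> - x \<in> I"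
    and "\<And>r x. x \<in> I \<Longrightarrow> r * x \<in> I"
  shows "left_ideal I"
  using assms by (auto simp: left_ideal_def additive_subgroup_def)

lemma left_ideal_sum: "left_ideal I \<Longrightarrow> (\<And>i. i \<in> S \<Longrightarrow> f i \<in> I) \<Longrightarrow> sum f S \<in> I"
  by (induction S rule: infinite_finite_induct) (auto intro: left_ideal_zero left_ideal_add)

lemma left_ideal_set_plus:
  assumes A: "left_ideal A" and B: "left_ideal B"
  shows "left_ideal (A + B)"
proof (rule left_idealI)
  show "0 \<in> A + B"
    using set_plus_intro[OF left_ideal_zero[OF A] left_ideal_zero[OF B]] by simp
next
  fix u v assume "u \<in> A + B" "v \<in> A + B"
  then obtain a b a' b' where "u = a + b" "v = a' + b'" "a \<in> A" "b \<in> B" "a' \<in> A" "b' \<in> B"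
    by (auto elim!: set_plus_elim)
  then have "u + v = (a + a') + (b + b')" "a + a' \<in> A" "b + b' \<in> B"
    using A B by (auto simp: algebra_simps intro: left_ideal_add)
  then show "u + v \<in> A + B" by auto
next
  fix u assume "u \<in> A + B"
  then obtain a b where "u = a + b" "a \<in> A" "b \<in> B" by (auto elim!: set_plus_elim)
  then have "- u = - a + - b" by simp
  then show "- u \<in> A + B"
    using A B \<open>a \<in> A\<close> \<open>b \<in> B\<close> by (simp only: set_plus_intro left_ideal_uminus)
next
  fix r u assume "u \<in> A + B"
  then obtain a b where "u = a + b" "a \<in> A" "b \<in> B" by (auto elim!: set_plus_elim)
  then show "r * u \<in> A + B"
    using A B by (auto simp: distrib_left intro: left_ideal_mult_left)
qed

lemma left_ideal_image_mult_right:
  assumes "left_ideal L"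
  shows "left_ideal ((\<lambda>x. x * r) ` L)"
proof (rule left_idealI)
  have "0 = 0 * r" by simp
  then show "0 \<in> (\<lambda>x. x * r) ` L"
    using assms by (blast intro: left_ideal_zero)
next
  fix u v assume "u \<in> (\<lambda>x. x * r) ` L" "v \<in> (\<lambda>x. x * r) ` L"
  then obtain a b where "u = a * r" "v = b * r" "a \<in> L" "b \<in> L" by blast
  then have "u + v = (a + b) * r" "a + b \<in> L"
    using assms by (auto simp: distrib_right intro: left_ideal_add)
  then show "u + v \<in> (\<lambda>x. x * r) ` L" by blast
next
  fix u assume "u \<in> (\<lambda>x. x * r) ` L"
  then obtain a where "u = a * r" "a \<in> L" by blast
  then have "- u = (- a) * r" "- a \<in> L"
    using assms by (auto intro: left_ideal_uminus)
  then show "- u \<in> (\<lambda>x. x * r) ` L" by blast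
next
  fix s u assume "u \<in> (\<lambda>x. x * r) ` L"
  then obtain a where "u = a * r" "a \<in> L" by blast
  then have "s * u = (s * a) * r" "s * a \<in> L"
    using assms by (auto simp: mult.assoc intro: left_ideal_mult_left)
  then show "s * u \<in> (\<lambda>x. x * r) ` L" by blast
qed

lemma npow_Suc_left: "x * npow x n = npow x (Suc n)"
  by (induction n) (simp_all add: mult.assoc[symmetric])

lemma npow_mult_swap: "npow (x * r) (Suc n) = x * npow (r * x) n * r"
proof (induction n)
  case 0
  then show ?case by (simp add: mult.assoc)
next
  case (Suc n)
  have "npow (x * r) (Suc (Suc n)) = x * npow (r * x) n * r * (x * r)"
    using Suc by simp
  also have "\<dots> = x * (npow (r * x) n * (r * x)) * r"
    by (simp add: mult.assoc)
  finally show ?case by simp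
qed

lemma nilpotent_mult_swap: "nilpotent (r * x) \<Longrightarrow> nilpotent (x * r)"
  unfolding nilpotent_def by (metis npow_mult_swap mult_zero_left mult_zero_right)

lemma nil_set_image_mult_right:
  "left_ideal L \<Longrightarrow> nil_set L \<Longrightarrow> nil_set ((\<lambda>x. x * r) ` L)"
  unfolding nil_set_def by (auto intro: nilpotent_mult_swap left_ideal_mult_left)

lemma circ_op_geometric_sum:
  assumes "npow x n = 0"
  shows "circ_op x (y + (\<Sum>i<n. npow x i * y)) = x + y"
proof -
  have telescope: "(\<Sum>i<n. npow x i * y) - (\<Sum>i<n. npow x (Suc i) * y) = x * y - npow x n * y"
    by (induction n) (auto simp: algebra_simps)
  have "x * (y + (\<Sum>i<n. npow x i * y)) = x * y + (\<Sum>i<n. npow x (Suc i) * y)"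
    by (simp add: distrib_left sum_distrib_left mult.assoc[symmetric] npow_Suc_left)
  with telescope assms show ?thesis
    by (simp add: circ_op_def algebra_simps)
qed

lemma nilpotent_add_if_circ_closed:
  fixes x y :: "'a::ring"
  assumes circ_closed: "\<forall>x y :: 'a. x \<in> Nil_set \<and> y \<in> Nil_set \<longrightarrow> circ_op x y \<in> Nil_set"
    and B: "left_ideal B" "nil_set B" and x: "nilpotent x" and y: "y \<in> B"
  shows "nilpotent (x + y)"
proof -
  obtain n where n: "npow x n = 0" using x nilpotent_def by blast
  define w where "w = y + (\<Sum>i<n. npow x i * y)"
  have "w \<in> B"
    unfolding w_def using B(1) y
    by (intro left_ideal_add left_ideal_sum left_ideal_mult_left)
  then have "nilpotent w" using B(2) by (auto simp: nil_set_def)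
  then have "circ_op x w \<in> Nil_set" using circ_closed x by (auto simp: Nil_set_def)
  then show ?thesis
    using circ_op_geometric_sum[OF n, of y] by (simp add: w_def Nil_set_def)
qed

lemma nil_set_set_plus:
  assumes "\<And>x y. nilpotent x \<Longrightarrow> y \<in> B \<Longrightarrow> nilpotent (x + y)" and "nil_set A"
  shows "nil_set (A + B)"
  using assms unfolding nil_set_def by (auto elim!: set_plus_elim)

definition nil_left_ideals_Union :: "'a::ring set" where
  "nil_left_ideals_Union = \<Union>{A. left_ideal A \<and> nil_set A}"

lemma two_sided_ideal_nil_left_ideals_Union:
  assumes sum_nil: "\<And>A B :: 'a::ring set. left_ideal A \<Longrightarrow> nil_set A \<Longrightarrow>
      left_ideal B \<Longrightarrow> nil_set B \<Longrightarrow> nil_set (A + B)"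
  shows "two_sided_ideal (nil_left_ideals_Union :: 'a set)"
  unfolding two_sided_ideal_def additive_subgroup_def
proof (intro conjI ballI allI impI)
  have "left_ideal {0 :: 'a}" "nil_set {0 :: 'a}"
    by (auto intro!: left_idealI exI[of _ 0] simp: nil_set_def nilpotent_def)
  then show "0 \<in> (nil_left_ideals_Union :: 'a set)"
    unfolding nil_left_ideals_Union_def by blast
next
  fix x y :: 'a assume "x \<in> nil_left_ideals_Union" "y \<in> nil_left_ideals_Union"
  then obtain A B where "left_ideal A" "nil_set A" "x \<in> A" "left_ideal B" "nil_set B" "y \<in> B"
    unfolding nil_left_ideals_Union_def by blast
  then show "x + y \<in> nil_left_ideals_Union"
    unfolding nil_left_ideals_Union_def using left_ideal_set_plus sum_nil by blast
next
  fix x r :: 'a assume "x \<in> nil_left_ideals_Union"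
  then obtain A where A: "left_ideal A" "nil_set A" "x \<in> A"
    unfolding nil_left_ideals_Union_def by blast
  then show "- x \<in> nil_left_ideals_Union" "r * x \<in> nil_left_ideals_Union"
    unfolding nil_left_ideals_Union_def
    by (auto intro: left_ideal_uminus left_ideal_mult_left)
  show "x * r \<in> nil_left_ideals_Union"
    unfolding nil_left_ideals_Union_def
    using A left_ideal_image_mult_right nil_set_image_mult_right by blast
qed

lemma satisfies_Koethe_if_nil_left_ideals_add:
  assumes "\<And>A B :: 'a::ring set. left_ideal A \<Longrightarrow> nil_set A \<Longrightarrow>
      left_ideal B \<Longrightarrow> nil_set B \<Longrightarrow> nil_set (A + B)"
  shows "satisfies_Koethe TYPE('a)"
proof -
  have "nil_set (nil_left_ideals_Union :: 'a set)"
    unfolding nil_set_def nil_left_ideals_Union_def by blast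
  then show ?thesis
    using two_sided_ideal_nil_left_ideals_Union[OF assms]
    unfolding satisfies_Koethe_def nil_left_ideals_Union_def by blast
qed

theorem lemma2p3:
  assumes "(\<forall>x y :: 'a::ring. x \<in> Nil_set \<and> y \<in> Nil_set \<longrightarrow> x + y \<in> Nil_set)
         \<or> (\<forall>x y :: 'a. x \<in> Nil_set \<and> y \<in> Nil_set \<longrightarrow> circ_op x y \<in> Nil_set)"
  shows "satisfies_Koethe TYPE('a)"
proof (rule satisfies_Koethe_if_nil_left_ideals_add)
  fix A B :: "'a set"
  assume "left_ideal A" "nil_set A" "left_ideal B" "nil_set B"
  have "nilpotent (x + y)" if "nilpotent x" "y \<in> B" for x y
    using assms
  proof
    assume "\<forall>x y :: 'a. x \<in> Nil_set \<and> y \<in> Nil_set \<longrightarrow> x + y \<in> Nil_set"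
    with that \<open>nil_set B\<close> show ?thesis by (auto simp: Nil_set_def nil_set_def)
  next
    assume "\<forall>x y :: 'a. x \<in> Nil_set \<and> y \<in> Nil_set \<longrightarrow> circ_op x y \<in> Nil_set"
    from nilpotent_add_if_circ_closed[OF this \<open>left_ideal B\<close> \<open>nil_set B\<close> that]
    show ?thesis .
  qed
  with \<open>nil_set A\<close> show "nil_set (A + B)" by (intro nil_set_set_plus)
qed

end
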